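(* Let $n\ge 2$ and let $q>3$ be a prime power, and let $\xi$ be a generator of ${\rm GF}(q)^\times$. Then ${\rm SL}(n,q)$ is generated by $h_1(\xi)h_2(\xi^{-1})=\mathrm{diag}(\xi,\xi^{-1},1,\dots,1)$ and $x_{12}(1)\,w$, where $x_{12}(1)=I+E_{12}$ and $w$ is the $n\times n$ matrix with entry $1$ in position $(1,n)$, entry $-1$ in positions $(i+1,i)$ for $1\le i\le n-1$, and $0$ elsewhere.
   Context: $E_{ij}$ denotes the square matrix with $1$ in position $(i,j)$ and $0$ elsewhere; $x_{ij}(\alpha)=I+\alpha E_{ij}$ for $i\ne j$; $h_i(\alpha)$ is the identity matrix with its $i$-th diagonal entry replaced by $\alpha$. *)

theory Defs
  imports "Jordan_Normal_Form.Determinant"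
begin

text \<open>Matrices are 0-indexed: paper position (i,j) corresponds to index (i-1,j-1).\<close>

inductive_set gen_mat :: "nat \<Rightarrow> 'a::field mat set \<Rightarrow> 'a mat set"
  for n :: nat and S :: "'a mat set" where
  gen_one: "1\<^sub>m n \<in> gen_mat n S"
| gen_mult: "A \<in> gen_mat n S \<Longrightarrow> B \<in> S \<Longrightarrow> A * B \<in> gen_mat n S"
| gen_mult_inv: "A \<in> gen_mat n S \<Longrightarrow> B \<in> S \<Longrightarrow> C \<in> carrier_mat n n \<Longrightarrow>
     B * C = 1\<^sub>m n \<Longrightarrow> C * B = 1\<^sub>m n \<Longrightarrow> A * C \<in> gen_mat n S"

definition SL :: "nat \<Rightarrow> 'a::field mat set" where
  "SL n = {A \<in> carrier_mat n n. det A = 1}"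

definition E_mat :: "nat \<Rightarrow> nat \<Rightarrow> nat \<Rightarrow> 'a::field mat" where
  "E_mat n i j = mat n n (\<lambda>(k,l). if k = i \<and> l = j then 1 else 0)"

definition x_mat :: "nat \<Rightarrow> nat \<Rightarrow> nat \<Rightarrow> 'a::field \<Rightarrow> 'a mat" where
  "x_mat n i j a = 1\<^sub>m n + a \<cdot>\<^sub>m E_mat n i j"

definition h_mat :: "nat \<Rightarrow> nat \<Rightarrow> 'a::field \<Rightarrow> 'a mat" where
  "h_mat n i a = mat n n (\<lambda>(k,l). if k = l then (if k = i then a else 1) else 0)"

definition w_mat :: "nat \<Rightarrow> 'a::field mat" where
  "w_mat n = mat n n (\<lambda>(k,l). if k = 0 \<and> l = n - 1 then 1
                              else if k = l + 1 then -1 else 0)"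

end

theory Submission
  imports Defs
begin

text \<open>
  Write $h = \mathrm{diag}(\xi, \xi^{-1}, 1, \dots, 1)$, $u = x_{12}(1)\,w$ and $G$ for the group
  they generate. Conjugation by $w$ shifts the root subgroups cyclically, $(i,j) \mapsto (i+1,j+1)$,
  and sends $x_{n1}(a)$ to $x_{12}(-a)$; hence $g = u^{-1} h u$ is $x_{n1}(1 - \xi^2)$ times a
  diagonal matrix, and the commutator of $g$ and $h$ is the root element $x_{n1}(c)$ with
  $c = (1 - \xi^2)(1 - 1/\kappa)$, where $\kappa = \xi^2$ for $n = 2$ and $\kappa = \xi$ for $n > 2$.
  Since $q > 3$ we have $\xi^2 \neq 1$, so $c \neq 0$. Conjugating by powers of $h$ multiplies
  $c$ by the powers of $\kappa$, which include all nonzero squares; as every element of a finite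
  field is a sum of two squares, the whole root subgroup $X_{n1}$ lies in $G$. Then
  $x_{12}(b) = u\,x_{n1}(-b)\,u^{-1}$ and $w = x_{12}(-1)\,u$ lie in $G$, conjugation by $w$ gives
  every $x_{i,i+1}$, commutators give all root elements, and these generate $\mathrm{SL}(n,q)$ by
  Gaussian elimination. Indices in the code are 0-based: $x_{n1}$ is \<open>x_mat n (n - 1) 0\<close>.
\<close>

lemma x_mat_eq_addrow_mat: "x_mat n i j a = addrow_mat n a i j"
  by (rule eq_matI) (auto simp: x_mat_def E_mat_def)

lemma x_mat_dim [simp]: "dim_row (x_mat n i j a) = n" "dim_col (x_mat n i j a) = n"
  by (simp_all add: x_mat_eq_addrow_mat)

lemma x_mat_carrier [simp]: "x_mat n i j a \<in> carrier_mat n n"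
  by (simp add: x_mat_eq_addrow_mat)

lemma index_x_mat [simp]:
  "r < n \<Longrightarrow> c < n \<Longrightarrow>
    x_mat n i j a $$ (r, c) = (if r = i \<and> c = j then a else 0) + (if r = c then 1 else 0)"
  by (simp add: x_mat_eq_addrow_mat)

lemma addcol_carrier [simp]: "addcol a k l A \<in> carrier_mat m n \<longleftrightarrow> A \<in> carrier_mat m n"
  unfolding carrier_mat_def by (simp only: mem_Collect_eq index_mat_addcol(4,5))

lemma x_mat_mult: "A \<in> carrier_mat n m \<Longrightarrow> j < n \<Longrightarrow> x_mat n i j a * A = addrow a i j A"
  unfolding x_mat_eq_addrow_mat by (rule addrow_mat[symmetric])

lemma mult_x_mat: "A \<in> carrier_mat m n \<Longrightarrow> i < n \<Longrightarrow> A * x_mat n i j a = addcol a j i A"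
  unfolding x_mat_eq_addrow_mat by (rule addcol_mat[symmetric])

lemma det_x_mat: "i \<noteq> j \<Longrightarrow> det (x_mat n i j a) = 1"
  by (simp add: x_mat_eq_addrow_mat det_addrow_mat)

lemma det_x_mat_mult: "A \<in> carrier_mat n n \<Longrightarrow> i \<noteq> j \<Longrightarrow> det (x_mat n i j a * A) = det A"
  by (simp add: det_mult[of _ n] det_x_mat)

lemma det_mult_x_mat: "A \<in> carrier_mat n n \<Longrightarrow> i \<noteq> j \<Longrightarrow> det (A * x_mat n i j a) = det A"
  by (simp add: det_mult[of _ n] det_x_mat)

lemma x_mat_zero: "x_mat n i j 0 = 1\<^sub>m n"
  by (rule eq_matI) (auto simp: x_mat_eq_addrow_mat)

lemma x_mat_add:
  "i < n \<Longrightarrow> j < n \<Longrightarrow> i \<noteq> j \<Longrightarrow> x_mat n i j a * x_mat n i j b = x_mat n i j (a + b)"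
  by (simp add: x_mat_mult[of _ n n]) (rule eq_matI; auto)

lemma x_mat_commutator:
  assumes "i < n" "j < n" "k < n" "i \<noteq> j" "j \<noteq> k" "i \<noteq> k"
  shows "x_mat n i j a * x_mat n j k 1 * x_mat n i j (- a) * x_mat n j k (- 1) = x_mat n i k a"
  using assms by (simp add: mult_x_mat[of _ n n]) (rule eq_matI; auto)

lemma det_mat_diag: "det (mat_diag n d) = (\<Prod>i<n. d i)"
proof -
  have "upper_triangular (mat_diag n d)"
    by (simp add: upper_triangular_def mat_diag_def)
  then have "det (mat_diag n d) = prod_list (diag_mat (mat_diag n d))"
    by (rule det_upper_triangular) (rule mat_diag_dim)
  also have "\<dots> = (\<Prod>i<n. d i)"
    by (simp add: prod_list_diag_prod mat_diag_def atLeast0LessThan)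
  finally show ?thesis .
qed

lemma mat_diag_mult_x_mat:
  assumes "i < n" "j < n" "d j \<noteq> 0"
  shows "mat_diag n d * x_mat n i j a = x_mat n i j (d i * a / d j) * mat_diag n d"
  using assms
  by (simp add: mat_diag_mult_left[of _ n n] mat_diag_mult_right[of _ n n]) (rule eq_matI; auto)

section \<open>The monomial matrix w\<close>

definition cyclic_succ :: "nat \<Rightarrow> nat \<Rightarrow> nat" where
  "cyclic_succ n l = (if l = n - 1 then 0 else Suc l)"

definition cyclic_pred :: "nat \<Rightarrow> nat \<Rightarrow> nat" where
  "cyclic_pred n k = (if k = 0 then n - 1 else k - 1)"

definition w_sign :: "nat \<Rightarrow> nat \<Rightarrow> 'a::field" where
  "w_sign n l = (if l = n - 1 then 1 else - 1)"

lemma cyclic_succ_less [simp]: "l < n \<Longrightarrow> cyclic_succ n l < n"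
  by (auto simp: cyclic_succ_def)

lemma cyclic_pred_less [simp]: "k < n \<Longrightarrow> cyclic_pred n k < n"
  by (auto simp: cyclic_pred_def)

lemma cyclic_succ_eq_iff: "k < n \<Longrightarrow> l < n \<Longrightarrow> k = cyclic_succ n l \<longleftrightarrow> l = cyclic_pred n k"
  by (auto simp: cyclic_succ_def cyclic_pred_def)

lemma cyclic_succ_inj [simp]: "k < n \<Longrightarrow> l < n \<Longrightarrow> cyclic_succ n k = cyclic_succ n l \<longleftrightarrow> k = l"
  by (auto simp: cyclic_succ_def)

lemma cyclic_pred_succ [simp]: "l < n \<Longrightarrow> cyclic_pred n (cyclic_succ n l) = l"
  by (auto simp: cyclic_succ_def cyclic_pred_def)

lemma cyclic_succ_pred [simp]: "k < n \<Longrightarrow> cyclic_succ n (cyclic_pred n k) = k"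
  by (auto simp: cyclic_succ_def cyclic_pred_def)

lemma w_sign_square [simp]: "w_sign n l * w_sign n l = 1"
  by (simp add: w_sign_def)

lemma w_mat_dim [simp]: "dim_row (w_mat n) = n" "dim_col (w_mat n) = n"
  by (simp_all add: w_mat_def)

lemma w_mat_carrier [simp]: "w_mat n \<in> carrier_mat n n"
  unfolding carrier_mat_def by simp

lemma index_w_mat:
  "k < n \<Longrightarrow> l < n \<Longrightarrow> w_mat n $$ (k, l) = (if k = cyclic_succ n l then w_sign n l else 0)"
  unfolding w_mat_def cyclic_succ_def w_sign_def by simp

lemma mult_w_mat_index:
  assumes "A \<in> carrier_mat m n" "r < m" "l < n"
  shows "(A * w_mat n) $$ (r, l) = A $$ (r, cyclic_succ n l) * w_sign n l"
proof -
  have "(A * w_mat n) $$ (r, l) = (\<Sum>k = 0..<n. A $$ (r, k) * w_mat n $$ (k, l))"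
    using assms by (simp add: scalar_prod_def row_def col_def)
  also have "\<dots> = (\<Sum>k = 0..<n. if k = cyclic_succ n l then A $$ (r, k) * w_sign n l else 0)"
    using assms by (intro sum.cong) (auto simp: index_w_mat)
  finally show ?thesis
    using assms by simp
qed

lemma w_mat_mult_index:
  assumes "A \<in> carrier_mat n m" "k < n" "c < m"
  shows "(w_mat n * A) $$ (k, c) = w_sign n (cyclic_pred n k) * A $$ (cyclic_pred n k, c)"
proof -
  have "(w_mat n * A) $$ (k, c) = (\<Sum>l = 0..<n. w_mat n $$ (k, l) * A $$ (l, c))"
    using assms by (simp add: scalar_prod_def row_def col_def)
  also have "\<dots> = (\<Sum>l = 0..<n. if l = cyclic_pred n k then w_sign n l * A $$ (l, c) else 0)"
    using assms by (intro sum.cong) (auto simp: index_w_mat cyclic_succ_eq_iff)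
  finally show ?thesis
    using assms by simp
qed

lemma w_mat_mult_x_mat:
  assumes "i < n" "j < n"
  shows "w_mat n * x_mat n i j a
    = x_mat n (cyclic_succ n i) (cyclic_succ n j) (w_sign n i * w_sign n j * a) * w_mat n"
proof (rule eq_matI)
  fix k l assume "k < dim_row (x_mat n (cyclic_succ n i) (cyclic_succ n j) (w_sign n i * w_sign n j * a) * w_mat n)"
    and "l < dim_col (x_mat n (cyclic_succ n i) (cyclic_succ n j) (w_sign n i * w_sign n j * a) * w_mat n)"
  then have kl: "k < n" "l < n"
    by simp_all
  then obtain k' where k': "k' < n" "k = cyclic_succ n k'"
    by (metis cyclic_pred_less cyclic_succ_pred)
  show "(w_mat n * x_mat n i j a) $$ (k, l)
      = (x_mat n (cyclic_succ n i) (cyclic_succ n j) (w_sign n i * w_sign n j * a) * w_mat n) $$ (k, l)"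
    using assms kl k'
    by (simp del: index_mult_mat(1) add: w_mat_mult_index[of _ _ n] mult_w_mat_index[of _ n])
qed simp_all

lemma mat_diag_mult_w_mat: "mat_diag n d * w_mat n = w_mat n * mat_diag n (\<lambda>l. d (cyclic_succ n l))"
  by (rule eq_matI)
    (auto simp: mat_diag_mult_left[of _ n n] mat_diag_mult_right[of _ n n] index_w_mat)

lemma det_w_mat: "det (w_mat n :: 'a::field mat) = 1"
proof (cases n)
  case 0
  then show ?thesis
    by (simp add: det_def)
next
  case (Suc m)
  have "det (w_mat n :: 'a mat) = (\<Sum>j<n. w_mat n $$ (0, j) * cofactor (w_mat n :: 'a mat) 0 j)"
    using Suc by (intro laplace_expansion_row) auto
  also have "\<dots> = cofactor (w_mat n :: 'a mat) 0 m"
    using Suc by (simp add: index_w_mat cyclic_succ_def w_sign_def if_distrib cong: if_cong)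
  also have "mat_delete (w_mat n :: 'a mat) 0 m = mat_diag m (\<lambda>_. - 1)"
    using Suc by (intro eq_matI) (auto simp: mat_delete_def index_w_mat cyclic_succ_def w_sign_def mat_diag_def)
  then have "cofactor (w_mat n :: 'a mat) 0 m = (- 1) ^ m * (- 1) ^ m"
    by (simp add: cofactor_def det_mat_diag)
  also have "\<dots> = 1"
    by (simp add: power_mult_distrib[symmetric])
  finally show ?thesis .
qed

section \<open>Matrix groups containing all root elements contain SL(n)\<close>

definition identity_prefix :: "nat \<Rightarrow> nat \<Rightarrow> 'a::zero_neq_one mat \<Rightarrow> bool" where
  "identity_prefix n k A \<longleftrightarrow>
    (\<forall>i<n. \<forall>j<n. (i < k \<or> j < k) \<longrightarrow> A $$ (i, j) = (if i = j then 1 else 0))"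

lemma det_zero_if_column_zero:
  assumes "(A :: 'a::comm_ring_1 mat) \<in> carrier_mat n n" "j < n" "\<And>i. i < n \<Longrightarrow> A $$ (i, j) = 0"
  shows "det A = 0"
  using laplace_expansion_column[OF assms(1,2)] assms(3) by simp

lemma identity_prefix_last_eq_one:
  assumes "A \<in> SL n" "identity_prefix n (n - 1) A"
  shows "A = 1\<^sub>m n"
proof (cases n)
  case 0
  then show ?thesis
    using assms(1) by (intro eq_matI) (auto simp: SL_def)
next
  case (Suc m)
  have A: "A \<in> carrier_mat n n" "det A = 1"
    using assms(1) by (auto simp: SL_def)
  have "upper_triangular A"
    using assms(2) A(1) by (auto simp: identity_prefix_def upper_triangular_def)
  then have "det A = (\<Prod>i = 0..<n. A $$ (i, i))"
    using A(1) by (simp add: det_upper_triangular prod_list_diag_prod)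
  also have "\<dots> = (\<Prod>i = 0..<n. if i = m then A $$ (m, m) else 1)"
    using assms(2) Suc by (intro prod.cong) (auto simp: identity_prefix_def)
  also have "\<dots> = A $$ (m, m)"
    using Suc by simp
  finally have "A $$ (m, m) = 1"
    using A(2) by simp
  then show ?thesis
    using assms(2) A(1) Suc by (intro eq_matI) (auto simp: identity_prefix_def less_Suc_eq)
qed

locale matrix_group =
  fixes n :: nat and G :: "'a::field mat set"
  assumes subset_carrier: "G \<subseteq> carrier_mat n n"
    and one_mem: "1\<^sub>m n \<in> G"
    and mult_mem: "A \<in> G \<Longrightarrow> B \<in> G \<Longrightarrow> A * B \<in> G"
    and left_inverse_mem: "A \<in> G \<Longrightarrow> \<exists>B\<in>G. B * A = 1\<^sub>m n"
begin

lemma mult_assoc: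
  "A \<in> carrier_mat n n \<Longrightarrow> B \<in> carrier_mat n n \<Longrightarrow> C \<in> carrier_mat n n \<Longrightarrow>
    A * B * C = A * (B * C)"
  by (rule assoc_mult_mat)

lemma mult_carrier [simp]:
  "A \<in> carrier_mat n n \<Longrightarrow> B \<in> carrier_mat n n \<Longrightarrow> A * B \<in> carrier_mat n n"
  by (rule mult_carrier_mat)

lemma mem_carrier: "A \<in> G \<Longrightarrow> A \<in> carrier_mat n n"
  using subset_carrier by blast

lemma mem_cancel_left:
  assumes "A \<in> G" "A * B \<in> G" "B \<in> carrier_mat n n"
  shows "B \<in> G"
proof -
  obtain A' where A': "A' \<in> G" "A' * A = 1\<^sub>m n"
    using left_inverse_mem[OF assms(1)] by blast
  have "A' * (A * B) = (A' * A) * B"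
    using A'(1) assms(1,3) by (simp add: mult_assoc mem_carrier)
  then have "A' * (A * B) = B"
    using A'(2) assms(3) by simp
  then show ?thesis
    using mult_mem[OF A'(1) assms(2)] by simp
qed

lemma mem_cancel_right:
  assumes "A \<in> G" "B * A \<in> G" "B \<in> carrier_mat n n"
  shows "B \<in> G"
proof -
  obtain A' where A': "A' \<in> G" "A' * A = 1\<^sub>m n"
    using left_inverse_mem[OF assms(1)] by blast
  then have "A * A' = 1\<^sub>m n"
    using A'(1) assms(1) by (auto intro: mat_mult_left_right_inverse mem_carrier)
  then have "B * A * A' = B"
    using A'(1) assms by (simp add: mult_assoc mem_carrier)
  then show ?thesis
    using mult_mem[OF assms(2) A'(1)] by simp
qed

lemma x_mat_commutator_mem:
  assumes "i < n" "j < n" "k < n" "i \<noteq> j" "j \<noteq> k" "i \<noteq> k"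
    and "\<And>b. x_mat n i j b \<in> G" "\<And>b. x_mat n j k b \<in> G"
  shows "x_mat n i k a \<in> G"
  using x_mat_commutator[OF assms(1-6), of a, symmetric] assms(7,8) by (auto intro!: mult_mem)

context
  assumes x_mat_mem: "\<And>i j a. i < n \<Longrightarrow> j < n \<Longrightarrow> i \<noteq> j \<Longrightarrow> x_mat n i j a \<in> G"
begin

lemma x_mat_mult_mem_iff:
  "A \<in> carrier_mat n n \<Longrightarrow> i < n \<Longrightarrow> j < n \<Longrightarrow> i \<noteq> j \<Longrightarrow> x_mat n i j a * A \<in> G \<longleftrightarrow> A \<in> G"
  using mem_cancel_left x_mat_mem mult_mem by blast

lemma mult_x_mat_mem_iff:
  "A \<in> carrier_mat n n \<Longrightarrow> i < n \<Longrightarrow> j < n \<Longrightarrow> i \<noteq> j \<Longrightarrow> A * x_mat n i j a \<in> G \<longleftrightarrow> A \<in> G"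
  using mem_cancel_right x_mat_mem mult_mem by blast

text \<open>
  Induction on d clears row and column k from the right, index r = k + d + 1 at a time, by
  one row and one column operation with the pivot A(k, k) = 1.
\<close>

lemma SL_mem_by_clearing:
  assumes k: "Suc k < n"
    and IH: "\<And>B. B \<in> SL n \<Longrightarrow> identity_prefix n (Suc k) B \<Longrightarrow> B \<in> G"
  shows "A \<in> SL n \<Longrightarrow> identity_prefix n k A \<Longrightarrow> A $$ (k, k) = 1 \<Longrightarrow>
    (\<And>r. k + d < r \<Longrightarrow> r < n \<Longrightarrow> A $$ (r, k) = 0 \<and> A $$ (k, r) = 0) \<Longrightarrow> A \<in> G"
proof (induction d arbitrary: A)
  case 0
  then have "identity_prefix n (Suc k) A"
    unfolding identity_prefix_def by (metis less_SucE nat_neq_iff add_0_right)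
  then show ?case
    using IH "0.prems"(1) by blast
next
  case (Suc d)
  show ?case
  proof (cases "k + Suc d < n")
    case False
    then show ?thesis
      using Suc.prems by (intro Suc.IH) (auto simp: Suc_le_eq)
  next
    case True
    define r where "r = k + Suc d"
    define X where "X = x_mat n r k (- A $$ (r, k))"
    define Y where "Y = x_mat n k r (- A $$ (k, r))"
    have A: "A \<in> carrier_mat n n" "det A = 1"
      using Suc.prems(1) by (auto simp: SL_def)
    have r: "r < n" "k < r"
      using True by (auto simp: r_def)
    have XA: "X * A \<in> carrier_mat n n"
      using A by (simp add: X_def mult_carrier_mat[of _ n n])
    have B: "X * A * Y \<in> carrier_mat n n" "det (X * A * Y) = 1"
      using A XA r by (simp_all add: Y_def mult_carrier_mat[of _ n n] det_mult_x_mat,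
          simp add: X_def det_x_mat_mult)
    have B_index: "(X * A * Y) $$ (i, j) =
        (if j = r then - A $$ (k, r) * (if i = r then - A $$ (r, k) * A $$ (k, k) + A $$ (i, k) else A $$ (i, k)) else 0)
        + (if i = r then - A $$ (r, k) * A $$ (k, j) + A $$ (i, j) else A $$ (i, j))"
      if "i < n" "j < n" for i j
      using that A r by (simp add: X_def Y_def x_mat_mult[of _ n n] mult_x_mat[of _ n n])
    have "X * A * Y \<in> G"
    proof (rule Suc.IH)
      show "X * A * Y \<in> SL n"
        using B by (simp add: SL_def)
      show "identity_prefix n k (X * A * Y)"
        using Suc.prems(2) r unfolding identity_prefix_def by (auto simp: B_index)
      show "(X * A * Y) $$ (k, k) = 1"
        using Suc.prems(3) r by (simp add: B_index)
      show "(X * A * Y) $$ (r', k) = 0 \<and> (X * A * Y) $$ (k, r') = 0" if "k + d < r'" "r' < n" for r'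
        using Suc.prems(3,4) that r by (auto simp: B_index r_def)
    qed
    then have "X * A \<in> G"
      using XA r mult_x_mat_mem_iff[of "X * A" k r] by (simp add: Y_def)
    then show ?thesis
      using A r by (simp add: X_def x_mat_mult_mem_iff)
  qed
qed

lemma SL_mem_by_pivot:
  assumes k: "Suc k < n"
    and IH: "\<And>B. B \<in> SL n \<Longrightarrow> identity_prefix n (Suc k) B \<Longrightarrow> B \<in> G"
    and A: "A \<in> SL n" "identity_prefix n k A"
    and i: "k < i" "i < n" "A $$ (i, k) \<noteq> 0"
  shows "A \<in> G"
proof -
  define X where "X = x_mat n k i ((1 - A $$ (k, k)) / A $$ (i, k))"
  have A_carrier: "A \<in> carrier_mat n n"
    using A(1) by (simp add: SL_def)
  have B_index: "(X * A) $$ (r, c) =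
      (if r = k then (1 - A $$ (k, k)) / A $$ (i, k) * A $$ (i, c) + A $$ (r, c) else A $$ (r, c))"
    if "r < n" "c < n" for r c
    using that A_carrier i by (simp add: X_def x_mat_mult[of _ n n])
  have "X * A \<in> G"
  proof (rule SL_mem_by_clearing[OF k IH, where d = n])
    show "X * A \<in> SL n"
      using A i by (auto simp: SL_def X_def det_x_mat_mult)
    show "identity_prefix n k (X * A)"
      using A(2) i unfolding identity_prefix_def by (auto simp: B_index)
    show "(X * A) $$ (k, k) = 1"
      using i k by (simp add: B_index)
  qed auto
  then show ?thesis
    using A_carrier i k by (simp add: X_def x_mat_mult_mem_iff)
qed

lemma SL_mem_step:
  assumes k: "Suc k < n"
    and IH: "\<And>B. B \<in> SL n \<Longrightarrow> identity_prefix n (Suc k) B \<Longrightarrow> B \<in> G"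
    and A: "A \<in> SL n" "identity_prefix n k A"
  shows "A \<in> G"
proof (cases "\<exists>i. k < i \<and> i < n \<and> A $$ (i, k) \<noteq> 0")
  case True
  then show ?thesis
    using SL_mem_by_pivot[OF k IH A] by blast
next
  case False
  have A_carrier: "A \<in> carrier_mat n n"
    using A(1) by (simp add: SL_def)
  have "A $$ (k, k) \<noteq> 0"
  proof
    assume "A $$ (k, k) = 0"
    then have "A $$ (i, k) = 0" if "i < n" for i
      using that False A(2) k unfolding identity_prefix_def by (cases i k rule: linorder_cases) auto
    then have "det A = 0"
      using A_carrier k by (intro det_zero_if_column_zero[of A n k]) auto
    then show False
      using A(1) by (simp add: SL_def)
  qed
  define X where "X = x_mat n (Suc k) k (1::'a)"
  have B_index: "(X * A) $$ (r, c) = (if r = Suc k then A $$ (k, c) + A $$ (r, c) else A $$ (r, c))"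
    if "r < n" "c < n" for r c
    using that A_carrier k by (simp add: X_def x_mat_mult[of _ n n])
  have "X * A \<in> G"
  proof (rule SL_mem_by_pivot[OF k IH])
    show "X * A \<in> SL n"
      using A by (auto simp: SL_def X_def det_x_mat_mult)
    show "identity_prefix n k (X * A)"
      using A(2) k unfolding identity_prefix_def by (auto simp: B_index)
    show "(X * A) $$ (Suc k, k) \<noteq> 0"
      using False k \<open>A $$ (k, k) \<noteq> 0\<close> by (simp add: B_index)
  qed (use k in auto)
  then show ?thesis
    using A_carrier k by (simp add: X_def x_mat_mult_mem_iff)
qed

lemma SL_subset: "SL n \<subseteq> G"
proof -
  have "\<forall>A. A \<in> SL n \<longrightarrow> identity_prefix n k A \<longrightarrow> A \<in> G" if "k \<le> n - 1" for k
    using that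
  proof (induction rule: inc_induct)
    case base
    then show ?case
      using identity_prefix_last_eq_one one_mem by blast
  next
    case (step k)
    then show ?case
      using SL_mem_step[of k] by auto
  qed
  then show ?thesis
    by (auto simp: identity_prefix_def)
qed

end
end

lemma det_nonzero_two_sided_inverse:
  assumes "(A :: 'a::field mat) \<in> carrier_mat n n" "det A \<noteq> 0"
  shows "\<exists>B\<in>carrier_mat n n. A * B = 1\<^sub>m n \<and> B * A = 1\<^sub>m n"
  using det_non_zero_imp_unit[OF assms, of undefined] by (auto simp: Units_def ring_mat_simps)

context
  fixes n :: nat and S :: "'a::field mat set"
  assumes S_carrier: "S \<subseteq> carrier_mat n n"
begin

lemma gen_mat_carrier: "A \<in> gen_mat n S \<Longrightarrow> A \<in> carrier_mat n n"
  by (induction rule: gen_mat.induct) (use S_carrier in auto)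

lemma gen_mat_generator:
  assumes "B \<in> S"
  shows "B \<in> gen_mat n S"
proof -
  have "1\<^sub>m n * B \<in> gen_mat n S"
    using gen_mat.gen_mult[OF gen_mat.gen_one assms] .
  then show ?thesis
    using assms S_carrier by auto
qed

lemma gen_mat_mult:
  assumes A: "A \<in> gen_mat n S"
  shows "B \<in> gen_mat n S \<Longrightarrow> A * B \<in> gen_mat n S"
proof (induction rule: gen_mat.induct)
  case gen_one
  then show ?case
    using A gen_mat_carrier[OF A] by simp
next
  case (gen_mult B s)
  have "A * (B * s) = A * B * s"
    using gen_mat_carrier[OF A] gen_mat_carrier[OF gen_mult.hyps(1)] gen_mult.hyps(2) S_carrier
    by (auto simp: assoc_mult_mat[of _ n n _ n _ n])
  then show ?case
    using gen_mat.gen_mult[OF gen_mult.IH gen_mult.hyps(2)] by simp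
next
  case (gen_mult_inv B s C)
  have "A * (B * C) = A * B * C"
    using gen_mat_carrier[OF A] gen_mat_carrier[OF gen_mult_inv.hyps(1)] gen_mult_inv.hyps(3)
    by (auto simp: assoc_mult_mat[of _ n n _ n _ n])
  then show ?case
    using gen_mat.gen_mult_inv[OF gen_mult_inv.IH gen_mult_inv.hyps(2-5)] by simp
qed

lemma gen_mat_left_inverse:
  assumes S_det: "\<And>B. B \<in> S \<Longrightarrow> det B \<noteq> 0"
  shows "A \<in> gen_mat n S \<Longrightarrow> \<exists>A'\<in>gen_mat n S. A' * A = 1\<^sub>m n"
proof (induction rule: gen_mat.induct)
  case gen_one
  then show ?case
    using gen_mat.gen_one by force
next
  case (gen_mult A s)
  obtain A' where A': "A' \<in> gen_mat n S" "A' * A = 1\<^sub>m n"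
    using gen_mult.IH by blast
  obtain C where C: "C \<in> carrier_mat n n" "s * C = 1\<^sub>m n" "C * s = 1\<^sub>m n"
    using det_nonzero_two_sided_inverse[of s n] S_det gen_mult.hyps(2) S_carrier by blast
  have "C \<in> gen_mat n S"
    using gen_mat.gen_mult_inv[OF gen_mat.gen_one gen_mult.hyps(2) C] C(1) by simp
  moreover have "(C * A') * (A * s) = C * ((A' * A) * s)"
    using gen_mat_carrier[OF A'(1)] gen_mat_carrier[OF gen_mult.hyps(1)] C(1)
      subsetD[OF S_carrier gen_mult.hyps(2)]
    by (simp add: assoc_mult_mat[of _ n n _ n _ n])
  then have "(C * A') * (A * s) = 1\<^sub>m n"
    using A'(2) C gen_mult.hyps(2) S_carrier by auto
  ultimately show ?case
    using gen_mat_mult A'(1) by blast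
next
  case (gen_mult_inv A s C)
  obtain A' where A': "A' \<in> gen_mat n S" "A' * A = 1\<^sub>m n"
    using gen_mult_inv.IH by blast
  have "(s * A') * (A * C) = s * ((A' * A) * C)"
    using gen_mat_carrier[OF A'(1)] gen_mat_carrier[OF gen_mult_inv.hyps(1)] gen_mult_inv.hyps(3)
      subsetD[OF S_carrier gen_mult_inv.hyps(2)]
    by (simp add: assoc_mult_mat[of _ n n _ n _ n])
  then have "(s * A') * (A * C) = 1\<^sub>m n"
    using A'(2) gen_mult_inv.hyps(3,4) by simp
  then show ?case
    using gen_mat_mult gen_mat_generator gen_mult_inv.hyps(2) A'(1) by blast
qed

lemma matrix_group_gen_mat:
  assumes "\<And>B. B \<in> S \<Longrightarrow> det B \<noteq> 0"
  shows "matrix_group n (gen_mat n S)"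
  using gen_mat_carrier gen_mat.gen_one gen_mat_mult gen_mat_left_inverse[OF assms]
  by unfold_locales auto

end

lemma gen_mat_subset_SL:
  assumes "S \<subseteq> SL n"
  shows "gen_mat n S \<subseteq> SL n"
proof
  fix A assume "A \<in> gen_mat n S"
  then show "A \<in> SL n"
  proof (induction rule: gen_mat.induct)
    case gen_one
    then show ?case
      by (simp add: SL_def)
  next
    case (gen_mult A s)
    then show ?case
      using assms by (auto simp: SL_def det_mult)
  next
    case (gen_mult_inv A s C)
    have "det s * det C = 1"
      using gen_mult_inv assms det_mult[of s n C] by (auto simp: SL_def)
    then show ?case
      using gen_mult_inv assms by (auto simp: SL_def det_mult)
  qed
qed

section \<open>Squares in a finite field\<close>

lemma card_square_root_set_le: "card {x::'a::field. x ^ 2 = s} \<le> (if s = 0 then 1 else 2)"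
proof (cases "\<exists>x0. x0 ^ 2 = s")
  case True
  then obtain x0 where x0: "x0 ^ 2 = s"
    by blast
  have "{x. x ^ 2 = s} \<subseteq> {x0, - x0}"
  proof
    fix x assume "x \<in> {x. x ^ 2 = s}"
    then have "(x - x0) * (x + x0) = 0"
      using x0 by (simp add: power2_eq_square algebra_simps)
    then show "x \<in> {x0, - x0}"
      by (auto simp: add_eq_0_iff)
  qed
  then have "card {x. x ^ 2 = s} \<le> card {x0, - x0}"
    by (intro card_mono) auto
  also have "\<dots> \<le> (if s = 0 then 1 else 2)"
    using x0 by (cases "s = 0") (auto simp: card_insert_if)
  finally show ?thesis .
qed simp

lemma card_UNIV_less_twice_card_squares:
  "card (UNIV :: 'a::{finite,field} set) < 2 * card (range (\<lambda>x::'a. x ^ 2))"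
proof -
  define S where "S = range (\<lambda>x::'a. x ^ 2)"
  have zero: "0 \<in> S"
    by (auto simp: S_def intro: range_eqI[of _ _ 0])
  have "card (UNIV :: 'a set) = card (\<Union>s\<in>S. {x. x ^ 2 = s})"
    by (rule arg_cong[where f = card]) (auto simp: S_def)
  also have "\<dots> \<le> (\<Sum>s\<in>S. card {x::'a. x ^ 2 = s})"
    by (rule card_UN_le) simp
  also have "\<dots> \<le> (\<Sum>s\<in>S. if s = 0 then 1 else 2)"
    by (intro sum_mono card_square_root_set_le)
  also have "\<dots> = 2 * (card S - 1) + 1"
    using zero by (simp add: sum.remove[of S 0] card_Diff_singleton)
  also have "\<dots> < 2 * card S"
    using zero card_gt_0_iff[of S] by auto
  finally show ?thesis
    by (simp add: S_def)
qed

lemma sum_of_two_squares: "\<exists>x y. (a::'a::{finite,field}) = x ^ 2 + y ^ 2"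
proof -
  define S where "S = range (\<lambda>x::'a. x ^ 2)"
  have "card ((\<lambda>s. a - s) ` S) = card S"
    by (rule card_image) (simp add: inj_on_def)
  then have "card (UNIV :: 'a set) < card S + card ((\<lambda>s. a - s) ` S)"
    using card_UNIV_less_twice_card_squares by (simp add: S_def mult_2)
  then have "S \<inter> (\<lambda>s. a - s) ` S \<noteq> {}"
    using card_Un_disjoint[of S "(\<lambda>s. a - s) ` S"] card_mono[of UNIV "S \<union> (\<lambda>s. a - s) ` S"]
    by auto
  then obtain x y where "x ^ 2 = a - y ^ 2"
    by (auto simp: S_def)
  then show ?thesis
    by (metis diff_add_cancel)
qed

lemma generator_square_ne_one:
  fixes \<xi> :: "'a::{finite,field}"
  assumes card: "card (UNIV :: 'a set) > 3"
    and generates: "\<And>y. y \<noteq> 0 \<Longrightarrow> \<exists>k. y = \<xi> ^ k"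
  shows "\<xi> ^ 2 \<noteq> 1"
proof
  assume square: "\<xi> ^ 2 = 1"
  have "\<xi> ^ k \<in> {1, \<xi>}" for k :: nat
  proof -
    have "\<xi> ^ k = (\<xi> ^ 2) ^ (k div 2) * \<xi> ^ (k mod 2)"
      by (simp flip: power_mult power_add)
    then show ?thesis
      using square by (cases "even k") (simp_all add: odd_iff_mod_2_eq_one)
  qed
  then have "(UNIV :: 'a set) \<subseteq> {0, 1, \<xi>}"
    using generates by blast
  then have "card (UNIV :: 'a set) \<le> card {0, 1, \<xi>}"
    by (intro card_mono) auto
  also have "\<dots> \<le> 3"
    by (simp add: card_insert_if)
  finally show False
    using card by simp
qed

definition h_diag :: "'a::field \<Rightarrow> nat \<Rightarrow> 'a" where
  "h_diag \<xi> k = (if k = 0 then \<xi> else if k = 1 then inverse \<xi> else 1)"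

lemma h_mat_eq_mat_diag: "h_mat n i a = mat_diag n (\<lambda>k. if k = i then a else 1)"
  by (rule eq_matI) (auto simp: h_mat_def mat_diag_def)

lemma h_mat_mult_h_mat: "h_mat n 0 \<xi> * h_mat n 1 (inverse \<xi>) = mat_diag n (h_diag \<xi>)"
  by (simp add: h_mat_eq_mat_diag) (rule arg_cong[where f = "mat_diag n"], auto simp: h_diag_def)

lemma det_mat_diag_h_diag:
  assumes "\<xi> \<noteq> 0" "2 \<le> n"
  shows "det (mat_diag n (h_diag \<xi>)) = 1"
proof -
  obtain m where "n = Suc (Suc m)"
    using assms(2) by (metis add_2_eq_Suc le_Suc_ex)
  then show ?thesis
    using assms(1) unfolding det_mat_diag by (simp only: prod.lessThan_Suc_shift) (simp add: h_diag_def)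
qed

locale matrix_group_with_h_u = matrix_group n G
  for n :: nat and G :: "'a::{finite,field} mat set" +
  fixes \<xi> :: 'a
  assumes two_le_n: "2 \<le> n"
    and xi_nonzero: "\<xi> \<noteq> 0"
    and xi_square_ne_one: "\<xi> ^ 2 \<noteq> 1"
    and xi_generates: "\<And>y. y \<noteq> 0 \<Longrightarrow> \<exists>k. y = \<xi> ^ k"
    and h_mem: "mat_diag n (h_diag \<xi>) \<in> G"
    and u_mem: "x_mat n 0 1 1 * w_mat n \<in> G"
begin

text \<open>Stops \<open>n - 1\<close> being rewritten to \<open>n - Suc 0\<close>, so that the lemmas about
  \<open>x_mat n (n - 1) 0\<close> below work as simplification rules.\<close>

declare One_nat_def [simp del]

abbreviation h :: "'a mat" where "h \<equiv> mat_diag n (h_diag \<xi>)"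

abbreviation u :: "'a mat" where "u \<equiv> x_mat n 0 1 1 * w_mat n"

definition \<kappa> :: 'a where "\<kappa> = \<xi> / h_diag \<xi> (n - 1)"

lemma index_simps [simp]:
  "0 < n" "1 < n" "n - 1 < n" "n - 1 \<noteq> 0" "\<not> n \<le> 1"
  "cyclic_succ n (n - 1) = 0" "cyclic_succ n 0 = 1"
  "w_sign n (n - 1) = 1" "w_sign n 0 = - 1"
  using two_le_n by (auto simp: cyclic_succ_def w_sign_def)

lemma h_diag_simps [simp]: "h_diag \<xi> 0 = \<xi>" "h_diag \<xi> 1 = inverse \<xi>" "h_diag \<xi> k \<noteq> 0"
  using xi_nonzero by (simp_all add: h_diag_def)

lemma kappa_eq: "\<kappa> = (if n = 2 then \<xi> ^ 2 else \<xi>)"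
  using two_le_n by (auto simp: \<kappa>_def h_diag_def power2_eq_square divide_inverse)

lemma kappa_nonzero: "\<kappa> \<noteq> 0"
  using xi_nonzero by (simp add: kappa_eq)

lemma kappa_ne_one: "\<kappa> \<noteq> 1"
  using xi_square_ne_one by (auto simp: kappa_eq)

lemma square_eq_kappa_power:
  assumes "y \<noteq> 0"
  shows "\<exists>m. y ^ 2 = \<kappa> ^ m"
proof -
  obtain k where "y = \<xi> ^ k"
    using xi_generates[OF assms] by blast
  then have "y ^ 2 = (\<xi> ^ 2) ^ k" "y ^ 2 = \<xi> ^ (2 * k)"
    by (simp_all flip: power_mult add: mult.commute)
  then show ?thesis
    by (metis kappa_eq)
qed

lemma h_mult_x_last_first: "h * x_mat n (n - 1) 0 a = x_mat n (n - 1) 0 (a / \<kappa>) * h"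
  using xi_nonzero by (simp add: mat_diag_mult_x_mat \<kappa>_def mult.commute)

lemma h_mult_x_01: "h * x_mat n 0 1 a = x_mat n 0 1 (\<xi> ^ 2 * a) * h"
  using xi_nonzero by (simp add: mat_diag_mult_x_mat power2_eq_square divide_inverse mult_ac)

lemma w_mult_x_last_first: "w_mat n * x_mat n (n - 1) 0 a = x_mat n 0 1 (- a) * w_mat n"
  using w_mat_mult_x_mat[of "n - 1" n 0 a] by simp

definition h_rotated :: "'a mat" where
  "h_rotated = mat_diag n (\<lambda>l. h_diag \<xi> (cyclic_succ n l))"

definition g :: "'a mat" where
  "g = x_mat n (n - 1) 0 (1 - \<xi> ^ 2) * h_rotated"

lemma h_rotated_carrier [simp]: "h_rotated \<in> carrier_mat n n"
  by (simp add: h_rotated_def)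

lemma h_rotated_commute: "h * h_rotated = h_rotated * h"
  by (simp add: h_rotated_def mult.commute)

lemma g_carrier [simp]: "g \<in> carrier_mat n n"
  by (simp add: g_def)

lemma u_mult_g: "u * g = h * u"
proof -
  have "u * g = x_mat n 0 1 1 * (w_mat n * x_mat n (n - 1) 0 (1 - \<xi> ^ 2)) * h_rotated"
    by (simp add: g_def mult_assoc)
  also have "w_mat n * x_mat n (n - 1) 0 (1 - \<xi> ^ 2) = x_mat n 0 1 (\<xi> ^ 2 - 1) * w_mat n"
    by (simp add: w_mult_x_last_first)
  also have "x_mat n 0 1 1 * (x_mat n 0 1 (\<xi> ^ 2 - 1) * w_mat n) * h_rotated
      = (x_mat n 0 1 1 * x_mat n 0 1 (\<xi> ^ 2 - 1)) * (w_mat n * h_rotated)"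
    by (simp add: mult_assoc)
  also have "x_mat n 0 1 1 * x_mat n 0 1 (\<xi> ^ 2 - 1) = x_mat n 0 1 (\<xi> ^ 2)"
    by (simp add: x_mat_add)
  also have "w_mat n * h_rotated = h * w_mat n"
    by (simp add: h_rotated_def mat_diag_mult_w_mat)
  also have "x_mat n 0 1 (\<xi> ^ 2) * (h * w_mat n) = (h * x_mat n 0 1 1) * w_mat n"
    by (simp add: h_mult_x_01 mult_assoc)
  also have "\<dots> = h * u"
    by (simp add: mult_assoc)
  finally show ?thesis .
qed

lemma g_mem: "g \<in> G"
proof (rule mem_cancel_left[OF u_mem])
  show "u * g \<in> G"
    unfolding u_mult_g by (rule mult_mem[OF h_mem u_mem])
qed simp

definition seed :: 'a where
  "seed = (1 - \<xi> ^ 2) * (1 - 1 / \<kappa>)"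

lemma seed_add: "seed + (1 - \<xi> ^ 2) / \<kappa> = 1 - \<xi> ^ 2"
  using kappa_nonzero by (simp add: seed_def field_simps)

lemma seed_nonzero: "seed \<noteq> 0"
  using xi_square_ne_one kappa_ne_one kappa_nonzero by (simp add: seed_def)

lemma x_seed_mem: "x_mat n (n - 1) 0 seed \<in> G"
  \<comment> \<open>$x_{n1}(\mathit{seed})$ is the commutator $g h g^{-1} h^{-1}$\<close>
proof (rule mem_cancel_right[OF mult_mem[OF h_mem g_mem]])
  have "h * g = (h * x_mat n (n - 1) 0 (1 - \<xi> ^ 2)) * h_rotated"
    by (simp add: g_def mult_assoc)
  also have "\<dots> = x_mat n (n - 1) 0 ((1 - \<xi> ^ 2) / \<kappa>) * (h * h_rotated)"
    by (simp only: h_mult_x_last_first) (simp add: mult_assoc)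
  finally have "h * g = x_mat n (n - 1) 0 ((1 - \<xi> ^ 2) / \<kappa>) * (h_rotated * h)"
    by (simp add: h_rotated_commute)
  then have "x_mat n (n - 1) 0 seed * (h * g)
      = (x_mat n (n - 1) 0 seed * x_mat n (n - 1) 0 ((1 - \<xi> ^ 2) / \<kappa>)) * (h_rotated * h)"
    by (simp add: mult_assoc)
  also have "\<dots> = x_mat n (n - 1) 0 (1 - \<xi> ^ 2) * (h_rotated * h)"
    by (simp add: x_mat_add seed_add)
  also have "\<dots> = g * h"
    by (simp add: g_def mult_assoc)
  finally show "x_mat n (n - 1) 0 seed * (h * g) \<in> G"
    using mult_mem[OF g_mem h_mem] by simp
qed simp

lemma x_seed_kappa_power_mem: "x_mat n (n - 1) 0 (seed * \<kappa> ^ m) \<in> G"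
proof (induction m)
  case 0
  then show ?case
    using x_seed_mem by simp
next
  case (Suc m)
  show ?case
  proof (rule mem_cancel_left[OF h_mem])
    have "h * x_mat n (n - 1) 0 (seed * \<kappa> ^ Suc m) = x_mat n (n - 1) 0 (seed * \<kappa> ^ m) * h"
      using kappa_nonzero by (simp add: h_mult_x_last_first mult_ac)
    then show "h * x_mat n (n - 1) 0 (seed * \<kappa> ^ Suc m) \<in> G"
      using mult_mem[OF Suc.IH h_mem] by simp
  qed simp
qed

lemma x_last_first_mem: "x_mat n (n - 1) 0 a \<in> G"
proof -
  have square_mem: "x_mat n (n - 1) 0 (seed * y ^ 2) \<in> G" for y
  proof (cases "y = 0")
    case True
    then show ?thesis
      using one_mem by (simp add: x_mat_zero)
  next
    case False
    then show ?thesis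
      using square_eq_kappa_power x_seed_kappa_power_mem by metis
  qed
  obtain y z where "a / seed = y ^ 2 + z ^ 2"
    using sum_of_two_squares by blast
  then have "x_mat n (n - 1) 0 a = x_mat n (n - 1) 0 (seed * y ^ 2) * x_mat n (n - 1) 0 (seed * z ^ 2)"
    using seed_nonzero by (simp add: x_mat_add field_simps)
  then show ?thesis
    using mult_mem[OF square_mem square_mem] by simp
qed

lemma x_01_mem: "x_mat n 0 1 b \<in> G"
proof (rule mem_cancel_right[OF u_mem])
  have "u * x_mat n (n - 1) 0 (- b) = (x_mat n 0 1 1 * x_mat n 0 1 b) * w_mat n"
    by (simp add: mult_assoc w_mult_x_last_first)
  also have "x_mat n 0 1 1 * x_mat n 0 1 b = x_mat n 0 1 b * x_mat n 0 1 1"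
    by (simp add: x_mat_add add.commute)
  finally have "x_mat n 0 1 b * u = u * x_mat n (n - 1) 0 (- b)"
    by (simp add: mult_assoc)
  then show "x_mat n 0 1 b * u \<in> G"
    using mult_mem[OF u_mem x_last_first_mem] by simp
qed simp

lemma w_mem: "w_mat n \<in> G"
proof -
  have "x_mat n 0 1 (- 1) * u = (x_mat n 0 1 (- 1) * x_mat n 0 1 1) * w_mat n"
    by (simp add: mult_assoc)
  also have "\<dots> = w_mat n"
    by (simp add: x_mat_add x_mat_zero)
  finally show ?thesis
    using mult_mem[OF x_01_mem[of "- 1"] u_mem] by simp
qed

lemma x_superdiagonal_mem: "Suc i < n \<Longrightarrow> x_mat n i (Suc i) a \<in> G"
proof (induction i arbitrary: a)
  case 0
  then show ?case
    using x_01_mem by (simp add: One_nat_def)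
next
  case (Suc i)
  show ?case
  proof (rule mem_cancel_right[OF w_mem])
    have "i \<noteq> n - 1" "Suc i \<noteq> n - 1"
      using Suc.prems by auto
    then have "w_mat n * x_mat n i (Suc i) a = x_mat n (Suc i) (Suc (Suc i)) a * w_mat n"
      using w_mat_mult_x_mat[of i n "Suc i" a] Suc.prems by (simp add: cyclic_succ_def w_sign_def)
    moreover have "w_mat n * x_mat n i (Suc i) a \<in> G"
      using mult_mem[OF w_mem Suc.IH] Suc.prems by simp
    ultimately show "x_mat n (Suc i) (Suc (Suc i)) a * w_mat n \<in> G"
      by simp
  qed simp
qed

lemma x_upper_mem: "i < j \<Longrightarrow> j < n \<Longrightarrow> x_mat n i j a \<in> G"
proof (induction j arbitrary: a)
  case 0
  then show ?case
    by simp
next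
  case (Suc j)
  show ?case
  proof (cases "i = j")
    case True
    then show ?thesis
      using x_superdiagonal_mem Suc.prems by simp
  next
    case False
    then have "i < j" "Suc j < n"
      using Suc.prems by auto
    show ?thesis
    proof (rule x_mat_commutator_mem[of i j "Suc j"])
      show "x_mat n i j b \<in> G" for b
        using Suc.IH \<open>i < j\<close> \<open>Suc j < n\<close> by simp
      show "x_mat n j (Suc j) b \<in> G" for b
        using x_superdiagonal_mem \<open>Suc j < n\<close> .
    qed (use \<open>i < j\<close> \<open>Suc j < n\<close> in auto)
  qed
qed

lemma x_last_mem:
  assumes "j < n - 1"
  shows "x_mat n (n - 1) j a \<in> G"
proof (cases "j = 0")
  case False
  show ?thesis
  proof (rule x_mat_commutator_mem[of "n - 1" 0 j])
    show "x_mat n 0 j b \<in> G" for b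
      using x_upper_mem False assms by simp
  qed (use False assms x_last_first_mem in auto)
qed (use x_last_first_mem in simp)

lemma x_mat_mem:
  assumes "i < n" "j < n" "i \<noteq> j"
  shows "x_mat n i j a \<in> G"
proof (cases "i < j")
  case False
  show ?thesis
  proof (cases "i = n - 1")
    case True
    then show ?thesis
      using x_last_mem assms False by simp
  next
    case False
    show ?thesis
    proof (rule x_mat_commutator_mem[of i "n - 1" j])
      show "x_mat n i (n - 1) b \<in> G" for b
        using x_upper_mem False assms by simp
      show "x_mat n (n - 1) j b \<in> G" for b
        using x_last_mem False assms \<open>\<not> i < j\<close> by simp
    qed (use False assms \<open>\<not> i < j\<close> in auto)
  qed
qed (use x_upper_mem assms in simp)

lemma contains_SL: "SL n \<subseteq> G"
  using SL_subset x_mat_mem by blast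

end

theorem mainTheorem2:
  fixes \<xi> :: "'a::{finite,field}" and n :: nat
  assumes "n \<ge> 2"
    and "card (UNIV :: 'a set) > 3"
    and "\<xi> \<noteq> 0" and "\<forall>y::'a. y \<noteq> 0 \<longrightarrow> (\<exists>k::nat. y = \<xi> ^ k)"
  shows "gen_mat n {h_mat n 0 \<xi> * h_mat n 1 (inverse \<xi>), x_mat n 0 1 1 * w_mat n} = SL n"
proof -
  let ?S = "{mat_diag n (h_diag \<xi>), x_mat n 0 1 1 * w_mat n}"
  have S_SL: "?S \<subseteq> SL n"
    using assms(1,3)
    by (simp add: SL_def det_mat_diag_h_diag det_mult[of _ n] det_x_mat det_w_mat mult_carrier_mat[of _ n n])
  have "matrix_group_with_h_u n (gen_mat n ?S) \<xi>"
  proof (intro matrix_group_with_h_u.intro)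
    show "matrix_group n (gen_mat n ?S)"
      using S_SL by (intro matrix_group_gen_mat) (auto simp: SL_def)
    show "matrix_group_with_h_u_axioms n (gen_mat n ?S) \<xi>"
      using assms generator_square_ne_one[of \<xi>] S_SL
      by unfold_locales (auto intro: gen_mat_generator simp: SL_def)
  qed
  then have "SL n \<subseteq> gen_mat n ?S"
    by (rule matrix_group_with_h_u.contains_SL)
  then show ?thesis
    unfolding h_mat_mult_h_mat using gen_mat_subset_SL[OF S_SL] by blast
qed

end
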